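(* For all integers $0\le k_1\le k_2<k_3$, $$\sigma_2(\mathsf S_{k_1,k_2,k_3})=\sigma_2\big((I\otimes A_H)\,G_{k_2\bmod s}\,(I\otimes A_H)\big),$$ where singular values of $\mathsf S_{k_1,k_2,k_3}:\mathbb R^{W[k_2+1,k_3]}\to\mathbb R^{W[k_1,k_2]}$ are taken with respect to the uniform probability measures on $W[k_2+1,k_3]$ and $W[k_1,k_2]$.
   Context: $G$ is a $d_1$-regular undirected graph on $[n]$ with a locally invertible rotation map $\mathrm{rot}_G$; $H$ is a $d_2$-regular undirected graph on $[d_1]^s$ with normalized adjacency $A_H$ and a fixed labeling of its edges at each vertex. $\mathrm{Rot}_i$ ($0\le i<s$) sends $(v,(a_0,\dots,a_{s-1}))$ to $(v',(a_0,\dots,a_i',\dots,a_{s-1}))$ with $(v',a_i')=\mathrm{rot}_G(v,a_i)$, and $G_i$ is its permutation matrix. For $0\le k_1\le k_2$, $W[k_1,k_2]$ is the set of tuples $(x_{k_1},(a_{k_1},b_{k_1}),\dots,(a_{k_2-1},b_{k_2-1}))$ with $x_{k_1}\in[n]\times[d_1]^s$, $(a_i,b_i)\in[d_2]^2$, determining vertices $x_{k_1},\dots,x_{k_2}$ where $x_{i+1}$ is obtained from $x_i$ by an $H$-step along edge $a_i$, then $\mathrm{Rot}_{i\bmod s}$, then an $H$-step along edge $b_i$. For $k_1\le k_2<k_3$, a uniform $\omega\in W[k_1,k_3]$ splits as $\omega_1\in W[k_1,k_2]$ (start vertex and first $k_2-k_1$ label pairs) and $\omega_2\in W[k_2+1,k_3]$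 (vertex $x_{k_2+1}$ and remaining labels); $(\mathsf S_{k_1,k_2,k_3}f)(w)=\mathbb E[f(\omega_2)\mid\omega_1=w]$. $\sigma_2$ denotes the second largest singular value. *)

theory Defs
  imports "HOL-Computational_Algebra.Polynomial" "HOL-Combinatorics.Permutations"
begin

definition det_on :: "'a set \<Rightarrow> ('a \<Rightarrow> 'a \<Rightarrow> 'b::comm_ring_1) \<Rightarrow> 'b" where
  "det_on A M = (\<Sum>p\<in>{p. p permutes A}. of_int (sign p) * (\<Prod>a\<in>A. M a (p a)))"

definition char_poly_on :: "'a set \<Rightarrow> ('a \<Rightarrow> 'a \<Rightarrow> real) \<Rightarrow> real poly" where
  "char_poly_on A M = det_on A (\<lambda>a b. (if a = b then [:0, 1:] else 0) - [:M a b:])"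

definition eig_count_ge :: "'a set \<Rightarrow> ('a \<Rightarrow> 'a \<Rightarrow> real) \<Rightarrow> real \<Rightarrow> nat" where
  "eig_count_ge A M x =
     (\<Sum>y\<in>{y. poly (char_poly_on A M) y = 0 \<and> x \<le> y}. order y (char_poly_on A M))"

text \<open>k-th largest eigenvalue counted with multiplicity (k >= 1); padded with 0 if there
  are fewer than k eigenvalues.\<close>
definition kth_largest_eig :: "'a set \<Rightarrow> ('a \<Rightarrow> 'a \<Rightarrow> real) \<Rightarrow> nat \<Rightarrow> real" where
  "kth_largest_eig A M k =
     (let E = {x. poly (char_poly_on A M) x = 0 \<and> k \<le> eig_count_ge A M x}
      in if E = {} then 0 else Max E)"

text \<open>Linear operators R^A -> R^B are represented as maps between function spaces;
  matrix entry (b,a) of T is (T e_a)(b).\<close>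
definition unit_vec :: "'a \<Rightarrow> 'a \<Rightarrow> real" where
  "unit_vec a = (\<lambda>x. if x = a then 1 else 0)"

text \<open>Matrix of T^* T, where the adjoint T^* is taken with respect to the inner products
  of L^2(A, muA) and L^2(B, muB):  (T^* g)(a) = (1/muA a) * sum_b muB b * T(e_a)(b) * g b.\<close>
definition gram_wrt ::
  "'a set \<Rightarrow> ('a \<Rightarrow> real) \<Rightarrow> 'b set \<Rightarrow> ('b \<Rightarrow> real) \<Rightarrow> (('a \<Rightarrow> real) \<Rightarrow> ('b \<Rightarrow> real))
     \<Rightarrow> 'a \<Rightarrow> 'a \<Rightarrow> real" where
  "gram_wrt A muA B muB T a a' =
     (1 / muA a) * (\<Sum>b\<in>B. muB b * T (unit_vec a) b * T (unit_vec a') b)"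

definition singular_value ::
  "'a set \<Rightarrow> ('a \<Rightarrow> real) \<Rightarrow> 'b set \<Rightarrow> ('b \<Rightarrow> real) \<Rightarrow> (('a \<Rightarrow> real) \<Rightarrow> ('b \<Rightarrow> real))
     \<Rightarrow> nat \<Rightarrow> real" where
  "singular_value A muA B muB T k = sqrt (kth_largest_eig A (gram_wrt A muA B muB T) k)"

definition uniform_prob :: "'a set \<Rightarrow> 'a \<Rightarrow> real" where
  "uniform_prob A = (\<lambda>_. 1 / real (card A))"

definition sigma2_unif :: "'a set \<Rightarrow> 'b set \<Rightarrow> (('a \<Rightarrow> real) \<Rightarrow> ('b \<Rightarrow> real)) \<Rightarrow> real" where
  "sigma2_unif A B T = singular_value A (uniform_prob A) B (uniform_prob B) T 2"

definition mat_mult :: "'a set \<Rightarrow> ('a \<Rightarrow> 'a \<Rightarrow> real) \<Rightarrow> ('a \<Rightarrow> 'a \<Rightarrow> real) \<Rightarrow> 'a \<Rightarrow> 'a \<Rightarrow> real" where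
  "mat_mult V M1 M2 x z = (\<Sum>y\<in>V. M1 x y * M2 y z)"

definition mat_op :: "'a set \<Rightarrow> ('a \<Rightarrow> 'a \<Rightarrow> real) \<Rightarrow> ('a \<Rightarrow> real) \<Rightarrow> 'a \<Rightarrow> real" where
  "mat_op V M f x = (\<Sum>y\<in>V. M x y * f y)"

text \<open>rot : [n] x [d] -> [n] x [d] is the rotation map of an undirected d-regular graph.\<close>
definition rotation_map :: "nat \<Rightarrow> nat \<Rightarrow> (nat \<times> nat \<Rightarrow> nat \<times> nat) \<Rightarrow> bool" where
  "rotation_map n d rot \<longleftrightarrow>
     (\<forall>v<n. \<forall>a<d. rot (v, a) \<in> {..<n} \<times> {..<d} \<and> rot (rot (v, a)) = (v, a))"

definition locally_invertible :: "nat \<Rightarrow> nat \<Rightarrow> (nat \<times> nat \<Rightarrow> nat \<times> nat) \<Rightarrow> bool" where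
  "locally_invertible n d rot \<longleftrightarrow>
     (\<exists>\<pi>. \<pi> permutes {..<d} \<and> (\<forall>v<n. \<forall>a<d. snd (rot (v, a)) = \<pi> a))"

text \<open>[d1]^s, as lists of length s.\<close>
definition cube :: "nat \<Rightarrow> nat \<Rightarrow> nat list set" where
  "cube d1 s = {\<alpha>. length \<alpha> = s \<and> set \<alpha> \<subseteq> {..<d1}}"

text \<open>H given by its edge labeling nbr u j = j-th neighbour of u; undirected d2-regular
  (multi)graph on V: the number of edges from u to w equals the number from w to u.\<close>
definition undirected_regular_labeling :: "'v set \<Rightarrow> nat \<Rightarrow> ('v \<Rightarrow> nat \<Rightarrow> 'v) \<Rightarrow> bool" where
  "undirected_regular_labeling V d nbr \<longleftrightarrow>
     (\<forall>u\<in>V. \<forall>j<d. nbr u j \<in> V) \<and>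
     (\<forall>u\<in>V. \<forall>w\<in>V. card {j. j < d \<and> nbr u j = w} = card {j. j < d \<and> nbr w j = u})"

definition norm_adj :: "nat \<Rightarrow> ('v \<Rightarrow> nat \<Rightarrow> 'v) \<Rightarrow> 'v \<Rightarrow> 'v \<Rightarrow> real" where
  "norm_adj d nbr u w = real (card {j. j < d \<and> nbr u j = w}) / real d"

definition Vtx :: "nat \<Rightarrow> nat \<Rightarrow> nat \<Rightarrow> (nat \<times> nat list) set" where
  "Vtx n d1 s = {..<n} \<times> cube d1 s"

definition Rot :: "(nat \<times> nat \<Rightarrow> nat \<times> nat) \<Rightarrow> nat \<Rightarrow> nat \<times> nat list \<Rightarrow> nat \<times> nat list" where
  "Rot rot i x = (case x of (v, \<alpha>) \<Rightarrow> (case rot (v, \<alpha> ! i) of (v', a') \<Rightarrow> (v', \<alpha>[i := a'])))"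

definition Hstep :: "(nat list \<Rightarrow> nat \<Rightarrow> nat list) \<Rightarrow> nat \<Rightarrow> nat \<times> nat list \<Rightarrow> nat \<times> nat list" where
  "Hstep nbr a x = (fst x, nbr (snd x) a)"

definition walk_step :: "(nat \<times> nat \<Rightarrow> nat \<times> nat) \<Rightarrow> (nat list \<Rightarrow> nat \<Rightarrow> nat list) \<Rightarrow> nat
    \<Rightarrow> nat \<Rightarrow> nat \<times> nat list \<Rightarrow> nat \<Rightarrow> nat \<Rightarrow> nat \<times> nat list" where
  "walk_step rot nbr s i x a b = Hstep nbr b (Rot rot (i mod s) (Hstep nbr a x))"

text \<open>walk_from ... i x_i [(a_i,b_i),...,(a_{j-1},b_{j-1})] = x_j.\<close>
fun walk_from :: "(nat \<times> nat \<Rightarrow> nat \<times> nat) \<Rightarrow> (nat list \<Rightarrow> nat \<Rightarrow> nat list) \<Rightarrow> nat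
    \<Rightarrow> nat \<Rightarrow> nat \<times> nat list \<Rightarrow> (nat \<times> nat) list \<Rightarrow> nat \<times> nat list" where
  "walk_from rot nbr s i x [] = x"
| "walk_from rot nbr s i x ((a, b) # ls) = walk_from rot nbr s (Suc i) (walk_step rot nbr s i x a b) ls"

text \<open>W[k1,k2]: start vertex x_{k1} and the label pairs (a_i,b_i), k1 <= i < k2.\<close>
definition Wset :: "nat \<Rightarrow> nat \<Rightarrow> nat \<Rightarrow> nat \<Rightarrow> nat \<Rightarrow> nat
    \<Rightarrow> ((nat \<times> nat list) \<times> (nat \<times> nat) list) set" where
  "Wset n d1 d2 s k1 k2 = {(x, ls). x \<in> Vtx n d1 s \<and> length ls = k2 - k1 \<and>
                                     set ls \<subseteq> {..<d2} \<times> {..<d2}}"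

text \<open>Splitting omega in W[k1,k3] into omega_1 in W[k1,k2] and omega_2 in W[k2+1,k3].\<close>
definition split1 :: "nat \<Rightarrow> nat \<Rightarrow> (nat \<times> nat list) \<times> (nat \<times> nat) list
    \<Rightarrow> (nat \<times> nat list) \<times> (nat \<times> nat) list" where
  "split1 k1 k2 \<omega> = (fst \<omega>, take (k2 - k1) (snd \<omega>))"

definition split2 :: "(nat \<times> nat \<Rightarrow> nat \<times> nat) \<Rightarrow> (nat list \<Rightarrow> nat \<Rightarrow> nat list) \<Rightarrow> nat
    \<Rightarrow> nat \<Rightarrow> nat \<Rightarrow> (nat \<times> nat list) \<times> (nat \<times> nat) list
    \<Rightarrow> (nat \<times> nat list) \<times> (nat \<times> nat) list" where
  "split2 rot nbr s k1 k2 \<omega> =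
     (walk_from rot nbr s k1 (fst \<omega>) (take (k2 - k1 + 1) (snd \<omega>)), drop (k2 - k1 + 1) (snd \<omega>))"

text \<open>(S f)(w) = E[f(omega_2) | omega_1 = w] for omega uniform on W[k1,k3].\<close>
definition S_op :: "nat \<Rightarrow> nat \<Rightarrow> nat \<Rightarrow> nat \<Rightarrow> (nat \<times> nat \<Rightarrow> nat \<times> nat)
    \<Rightarrow> (nat list \<Rightarrow> nat \<Rightarrow> nat list) \<Rightarrow> nat \<Rightarrow> nat \<Rightarrow> nat
    \<Rightarrow> ((nat \<times> nat list) \<times> (nat \<times> nat) list \<Rightarrow> real)
    \<Rightarrow> (nat \<times> nat list) \<times> (nat \<times> nat) list \<Rightarrow> real" where
  "S_op n d1 d2 s rot nbr k1 k2 k3 f w =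
     (let \<Omega> = {\<omega> \<in> Wset n d1 d2 s k1 k3. split1 k1 k2 \<omega> = w}
      in (\<Sum>\<omega>\<in>\<Omega>. f (split2 rot nbr s k1 k2 \<omega>)) / real (card \<Omega>))"

definition I_tensor_AH :: "nat \<Rightarrow> (nat list \<Rightarrow> nat \<Rightarrow> nat list)
    \<Rightarrow> nat \<times> nat list \<Rightarrow> nat \<times> nat list \<Rightarrow> real" where
  "I_tensor_AH d2 nbr x y = (if fst x = fst y then norm_adj d2 nbr (snd x) (snd y) else 0)"

definition Gmat :: "(nat \<times> nat \<Rightarrow> nat \<times> nat) \<Rightarrow> nat \<Rightarrow> nat \<times> nat list \<Rightarrow> nat \<times> nat list \<Rightarrow> real" where
  "Gmat rot i x y = (if Rot rot i y = x then 1 else 0)"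

end

theory Submission
  imports Defs "Jordan_Normal_Form.Determinant"
begin

text \<open>The conditional expectation only sees the vertex x at which the first part w of the walk
  ends: (S e_a)(w) = T(x, y) / |L|, where y is the vertex of a, L the set of label lists of the
  remaining steps and T = (I \<otimes> A_H) G (I \<otimes> A_H) the transition matrix of one step. Every step
  preserves the uniform measure on vertices, hence so does w \<mapsto> x, and S^* S becomes the matrix
  (T^t T)(y, y') / |L| on W[k2+1,k3] = V \<times> L. That matrix is X Y, with Y the projection to the
  vertex and X the average over L, whereas Y X = T^t T is the Gram matrix of T. By Sylvester's
  determinant identity X Y and Y X have the same characteristic polynomial up to a power of the
  variable; both are positive semidefinite, so the extra zero eigenvalues do not move the second
  largest eigenvalue.\<close>

section \<open>Spectra of \<open>X Y\<close> and \<open>Y X\<close>\<close>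

lemma sylvester_determinant_identity:
  fixes X :: "'a::idom mat" and t :: 'a
  assumes X: "X \<in> carrier_mat a b" and Y: "Y \<in> carrier_mat b a"
  shows "t ^ b * det (t \<cdot>\<^sub>m 1\<^sub>m a - X * Y) = t ^ a * det (t \<cdot>\<^sub>m 1\<^sub>m b - Y * X)"
proof -
  \<comment> \<open>Both sides compute \<open>det L\<close>, by block elimination of either off-diagonal block.\<close>
  let ?L = "four_block_mat (1\<^sub>m a) X Y (t \<cdot>\<^sub>m 1\<^sub>m b)"
  let ?E1 = "four_block_mat (1\<^sub>m a) (0\<^sub>m a b) (- Y) (1\<^sub>m b)"
  let ?E2 = "four_block_mat (t \<cdot>\<^sub>m 1\<^sub>m a) (- X) (0\<^sub>m b a) (1\<^sub>m b)"
  have L: "?L \<in> carrier_mat (a+b) (a+b)" using X Y by auto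
  have E1: "?E1 \<in> carrier_mat (a+b) (a+b)" using X Y by auto
  have E2: "?E2 \<in> carrier_mat (a+b) (a+b)" using X Y by auto
  have C1: "t \<cdot>\<^sub>m 1\<^sub>m b - Y * X \<in> carrier_mat b b" using X Y by auto
  have C2: "t \<cdot>\<^sub>m 1\<^sub>m a - X * Y \<in> carrier_mat a a" using X Y by auto
  have E1_L: "?E1 * ?L = four_block_mat (1\<^sub>m a) X (0\<^sub>m b a) (t \<cdot>\<^sub>m 1\<^sub>m b - Y * X)"
    by (subst mult_four_block_mat[where ?nr1.0=a and ?n1.0=a and ?n2.0=b and ?nr2.0=b and ?nc1.0=a and ?nc2.0=b])
      (use X Y in auto)
  have "det ?E1 * det ?L = det (?E1 * ?L)" using det_mult[OF E1 L] by simp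
  also have "\<dots> = det (1\<^sub>m a) * det (t \<cdot>\<^sub>m 1\<^sub>m b - Y * X)"
    unfolding E1_L by (rule det_four_block_mat_lower_left_zero[OF one_carrier_mat X refl C1])
  finally have det_E1_L: "det ?E1 * det ?L = det (t \<cdot>\<^sub>m 1\<^sub>m b - Y * X)" by simp
  have "det ?E1 = det (1\<^sub>m a) * det (1\<^sub>m b)"
    by (rule det_four_block_mat_upper_right_zero[OF one_carrier_mat refl _ one_carrier_mat]) (use Y in auto)
  then have "det ?E1 = 1" by simp
  with det_E1_L have det_L: "det ?L = det (t \<cdot>\<^sub>m 1\<^sub>m b - Y * X)" by simp
  have unit_col: "Matrix.unit_vec a i \<bullet> col X j = X $$ (i, j)" if "i < a" "j < b" for i j
    using X that by (simp add: scalar_prod_left_unit)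
  have E2_L: "?E2 * ?L = four_block_mat (t \<cdot>\<^sub>m 1\<^sub>m a - X * Y) (0\<^sub>m a b) Y (t \<cdot>\<^sub>m 1\<^sub>m b)"
    by (subst mult_four_block_mat[where ?nr1.0=a and ?n1.0=a and ?n2.0=b and ?nr2.0=b and ?nc1.0=a and ?nc2.0=b])
      (use X Y in \<open>auto intro!: eq_matI simp: algebra_simps unit_col\<close>)
  have "det ?E2 * det ?L = det (?E2 * ?L)" using det_mult[OF E2 L] by simp
  also have "\<dots> = det (t \<cdot>\<^sub>m 1\<^sub>m a - X * Y) * det (t \<cdot>\<^sub>m 1\<^sub>m b)"
    unfolding E2_L by (rule det_four_block_mat_upper_right_zero[OF C2 refl Y]) simp
  finally have det_E2_L: "det ?E2 * det ?L = det (t \<cdot>\<^sub>m 1\<^sub>m a - X * Y) * t ^ b" by simp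
  have "det ?E2 = det (t \<cdot>\<^sub>m 1\<^sub>m a) * det (1\<^sub>m b)"
    by (rule det_four_block_mat_lower_left_zero[OF _ _ refl one_carrier_mat]) (use X in auto)
  then have "det ?E2 = t ^ a" by simp
  with det_E2_L det_L show ?thesis by (simp add: mult.commute)
qed

lemma det_on_reindex:
  assumes f: "bij_betw f I A" and fin: "finite I"
  shows "det_on A M = det_on I (\<lambda>i j. M (f i) (f j))"
proof -
  let ?h = "map_permutation I f"
  let ?g = "map_permutation A (inv_into I f)"
  have injf: "inj_on f I" using f by (auto simp: bij_betw_def)
  have bijg: "bij_betw (inv_into I f) A I" using f by (rule bij_betw_inv_into)
  have hb: "bij_betw ?h {p. p permutes I} {q. q permutes A}"
  proof (rule bij_betw_byWitness[where f' = ?g])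
    show "\<forall>p\<in>{p. p permutes I}. ?g (?h p) = p"
      using map_permutation_compose_inv[OF f] f by (auto simp: bij_betw_def inv_into_f_f)
    show "\<forall>q\<in>{q. q permutes A}. ?h (?g q) = q"
      using map_permutation_compose_inv[OF bijg] f by (auto simp: bij_betw_def f_inv_into_f)
    show "?h ` {p. p permutes I} \<subseteq> {q. q permutes A}"
      using map_permutation_permutes[OF f] by auto
    show "?g ` {q. q permutes A} \<subseteq> {p. p permutes I}"
      using map_permutation_permutes[OF bijg] by auto
  qed
  have "det_on A M = (\<Sum>p | p permutes I. of_int (sign (?h p)) * (\<Prod>a\<in>A. M a (?h p a)))"
    unfolding det_on_def by (rule sum.reindex_bij_betw[OF hb, symmetric])
  also have "\<dots> = (\<Sum>p | p permutes I. of_int (sign p) * (\<Prod>i\<in>I. M (f i) (f (p i))))"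
  proof (rule sum.cong[OF refl])
    fix p assume p: "p \<in> {p. p permutes I}"
    have "sign (?h p) = sign p" using sign_map_permutation[OF injf _ fin] p by auto
    moreover have "(\<Prod>a\<in>A. M a (?h p a)) = (\<Prod>i\<in>I. M (f i) (?h p (f i)))"
      by (rule prod.reindex_bij_betw[OF f, symmetric])
    moreover have "?h p (f i) = f (p i)" if "i \<in> I" for i
      using map_permutation_apply[OF injf that] .
    ultimately show "of_int (sign (?h p)) * (\<Prod>a\<in>A. M a (?h p a))
        = of_int (sign p) * (\<Prod>i\<in>I. M (f i) (f (p i)))"
      by simp
  qed
  finally show ?thesis unfolding det_on_def .
qed

lemma det_on_eq_det_mat:
  assumes "bij_betw f {0..<N} A"
  shows "det_on A M = det (mat N N (\<lambda>(i, j). M (f i) (f j)))"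
  unfolding det_on_reindex[OF assms finite_atLeastLessThan]
  unfolding det_on_def det_def by (auto intro!: sum.cong prod.cong)

lemma poly_det_on: "poly (det_on A M) x = det_on A (\<lambda>i j. poly (M i j) x)"
  unfolding det_on_def by (simp add: poly_sum poly_prod)

lemma char_poly_on_cong:
  assumes "\<And>a b. a \<in> A \<Longrightarrow> b \<in> A \<Longrightarrow> M a b = M' a b"
  shows "char_poly_on A M = char_poly_on A M'"
  unfolding char_poly_on_def det_on_def
  by (intro sum.cong refl arg_cong2[where f="(*)"] prod.cong) (auto simp: assms permutes_in_image)

lemma char_poly_on_mult_eq_det:
  fixes X :: "'a \<Rightarrow> 'b \<Rightarrow> real" and Y :: "'b \<Rightarrow> 'a \<Rightarrow> real"
  assumes f: "bij_betw f {0..<na} A" and g: "bij_betw g {0..<nb} B"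
  shows "char_poly_on A (\<lambda>a a'. \<Sum>b\<in>B. X a b * Y b a')
       = det ([:0, 1:] \<cdot>\<^sub>m 1\<^sub>m na - mat na nb (\<lambda>(i, j). [:X (f i) (g j):])
                                * mat nb na (\<lambda>(i, j). [:Y (g i) (f j):]))"
    (is "_ = det (_ - ?X * ?Y)")
proof -
  have XY: "(?X * ?Y) $$ (i, j) = [:\<Sum>b\<in>B. X (f i) b * Y b (f j):]" if "i < na" "j < na" for i j
  proof -
    have "(?X * ?Y) $$ (i, j) = (\<Sum>k\<in>{0..<nb}. [:X (f i) (g k) * Y (g k) (f j):])"
      using that by (auto simp: scalar_prod_def mult_to_poly mult.commute intro!: sum.cong)
    also have "\<dots> = [:\<Sum>k\<in>{0..<nb}. X (f i) (g k) * Y (g k) (f j):]"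
      by (rule sum_to_poly)
    also have "(\<Sum>k\<in>{0..<nb}. X (f i) (g k) * Y (g k) (f j)) = (\<Sum>b\<in>B. X (f i) b * Y b (f j))"
      by (rule sum.reindex_bij_betw[OF g])
    finally show ?thesis .
  qed
  have "f i = f j \<longleftrightarrow> i = j" if "i < na" "j < na" for i j
    using f that by (auto simp: bij_betw_def inj_on_def)
  with XY show ?thesis
    unfolding char_poly_on_def det_on_eq_det_mat[OF f]
    by (intro arg_cong[where f = det] eq_matI) auto
qed

lemma char_poly_on_mult_commute:
  fixes X :: "'a \<Rightarrow> 'b \<Rightarrow> real" and Y :: "'b \<Rightarrow> 'a \<Rightarrow> real"
  assumes "finite A" "finite B"
  shows "[:0, 1:] ^ card B * char_poly_on A (\<lambda>a a'. \<Sum>b\<in>B. X a b * Y b a')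
       = [:0, 1:] ^ card A * char_poly_on B (\<lambda>b b'. \<Sum>a\<in>A. Y b a * X a b')"
proof -
  obtain f where f: "bij_betw f {0..<card A} A" using ex_bij_betw_nat_finite[OF assms(1)] by blast
  obtain g where g: "bij_betw g {0..<card B} B" using ex_bij_betw_nat_finite[OF assms(2)] by blast
  show ?thesis
    unfolding char_poly_on_mult_eq_det[OF f g] char_poly_on_mult_eq_det[OF g f]
    by (rule sylvester_determinant_identity) auto
qed

lemma char_poly_on_root_eigenvector:
  assumes B: "finite B" and root: "poly (char_poly_on B M) l = 0"
  obtains v b where "b \<in> B" "v b \<noteq> 0" "\<And>b. b \<in> B \<Longrightarrow> (\<Sum>b'\<in>B. M b b' * v b') = l * v b"
proof -
  define N where "N = card B"
  obtain g where g: "bij_betw g {0..<N} B" unfolding N_def using ex_bij_betw_nat_finite[OF B] by blast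
  define Ml where "Ml = mat N N (\<lambda>(i, j). (if i = j then l else 0) - M (g i) (g j))"
  have "g i = g j \<longleftrightarrow> i = j" if "i < N" "j < N" for i j
    using g that by (auto simp: bij_betw_def inj_on_def)
  then have "det Ml = poly (char_poly_on B M) l"
    unfolding char_poly_on_def poly_det_on unfolding det_on_eq_det_mat[OF g] Ml_def
    by (intro arg_cong[where f = det] eq_matI) auto
  then obtain w where w: "w \<in> carrier_vec N" "w \<noteq> 0\<^sub>v N" "Ml *\<^sub>v w = 0\<^sub>v N"
    using root det_0_iff_vec_prod_zero[of Ml N] by (auto simp: Ml_def)
  obtain i where i: "i < N" "w $ i \<noteq> 0"
    using w by (metis carrier_vecD eq_vecI index_zero_vec(1,2))
  define v where "v b = w $ inv_into {0..<N} g b" for b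
  have v_g: "v (g j) = w $ j" if "j < N" for j
    using g that by (simp add: v_def bij_betw_def inv_into_f_f)
  show thesis
  proof (rule that[of "g i" v])
    show "g i \<in> B" "v (g i) \<noteq> 0" using g i v_g by (auto simp: bij_betwE)
    fix b assume "b \<in> B"
    then obtain j where j: "j < N" "b = g j" using g by (auto simp: bij_betw_def)
    have "(\<Sum>b'\<in>B. M b b' * v b') = (\<Sum>k\<in>{0..<N}. M (g j) (g k) * w $ k)"
      using j by (simp add: sum.reindex_bij_betw[OF g, symmetric] v_g)
    also have "\<dots> = l * w $ j"
    proof -
      have "0 = (Ml *\<^sub>v w) $ j" using w j by simp
      also have "\<dots> = (\<Sum>k\<in>{0..<N}. (if j = k then l * w $ k else 0) - M (g j) (g k) * w $ k)"
        using j w(1) by (auto simp: Ml_def scalar_prod_def left_diff_distrib intro!: sum.cong)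
      also have "\<dots> = l * w $ j - (\<Sum>k\<in>{0..<N}. M (g j) (g k) * w $ k)"
        using j by (simp add: sum_subtractf)
      finally show ?thesis by simp
    qed
    finally show "(\<Sum>b'\<in>B. M b b' * v b') = l * v b" using j v_g by simp
  qed
qed

lemma gram_char_poly_roots_nonneg:
  fixes Z :: "'c \<Rightarrow> 'b \<Rightarrow> real"
  assumes B: "finite B" and root: "poly (char_poly_on B (\<lambda>b b'. \<Sum>c\<in>C. Z c b * Z c b')) l = 0"
  shows "0 \<le> l"
proof -
  obtain v b0 where b0: "b0 \<in> B" "v b0 \<noteq> 0"
    and eig: "\<And>b. b \<in> B \<Longrightarrow> (\<Sum>b'\<in>B. (\<Sum>c\<in>C. Z c b * Z c b') * v b') = l * v b"
    using char_poly_on_root_eigenvector[OF B root] by blast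
  have "l * (\<Sum>b\<in>B. v b * v b) = (\<Sum>b\<in>B. v b * (l * v b))"
    by (simp add: sum_distrib_left ac_simps)
  also have "\<dots> = (\<Sum>b\<in>B. v b * (\<Sum>b'\<in>B. (\<Sum>c\<in>C. Z c b * Z c b') * v b'))"
    by (simp add: eig)
  also have "\<dots> = (\<Sum>b\<in>B. \<Sum>b'\<in>B. \<Sum>c\<in>C. (Z c b * v b) * (Z c b' * v b'))"
    by (simp add: sum_distrib_left sum_distrib_right ac_simps)
  also have "\<dots> = (\<Sum>c\<in>C. (\<Sum>b\<in>B. Z c b * v b) * (\<Sum>b\<in>B. Z c b * v b))"
    by (simp add: sum_product sum.swap[of _ C])
  finally have "0 \<le> l * (\<Sum>b\<in>B. v b * v b)" by (simp add: sum_nonneg)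
  moreover have "0 < (\<Sum>b\<in>B. v b * v b)"
    using B b0 by (intro sum_pos2[of _ b0]) (auto simp: zero_less_mult_iff)
  ultimately show ?thesis by (simp add: zero_le_mult_iff)
qed

definition kth_largest_root :: "real poly \<Rightarrow> nat \<Rightarrow> real" where
  "kth_largest_root p k =
     (let E = {x. poly p x = 0 \<and> k \<le> (\<Sum>y | poly p y = 0 \<and> x \<le> y. order y p)}
      in if E = {} then 0 else Max E)"

lemma kth_largest_eig_eq_kth_largest_root:
  "kth_largest_eig A M k = kth_largest_root (char_poly_on A M) k"
  unfolding kth_largest_eig_def kth_largest_root_def eig_count_ge_def ..

lemma kth_largest_eig_cong:
  assumes "\<And>a b. a \<in> A \<Longrightarrow> b \<in> A \<Longrightarrow> M a b = M' a b"
  shows "kth_largest_eig A M k = kth_largest_eig A M' k"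
  by (simp only: kth_largest_eig_eq_kth_largest_root char_poly_on_cong[of A M M', OF assms])

lemma Max_or_zero_eq_positive_part:
  fixes E :: "real set"
  assumes "finite E" "\<forall>y\<in>E. 0 \<le> y"
  shows "(if E = {} then 0 else Max E) = (if E \<inter> {0<..} = {} then 0 else Max (E \<inter> {0<..}))"
proof (cases "E \<inter> {0<..} = {}")
  case True
  then have "E \<subseteq> {0}" using assms(2) by force
  with True show ?thesis by (cases "E = {}") (auto simp: subset_singleton_iff)
next
  case False
  then obtain z where z: "z \<in> E" "z > 0" by auto
  have max: "Max E \<in> E" "z \<le> Max E" using assms(1) z by (auto intro: Max_in)
  have "0 < Max E" using max z by linarith
  with assms(1) max have "Max (E \<inter> {0<..}) = Max E"
    by (intro Max_eqI) auto
  with False z show ?thesis by auto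
qed

text \<open>Zero roots only ever count below all positive roots, so when no root is negative
  padding with zero roots does not change the k-th largest one.\<close>
lemma kth_largest_root_mult_X_power:
  assumes p: "p = [:0, 1:] ^ m * q" and nonneg: "\<And>y. poly q y = 0 \<Longrightarrow> 0 \<le> y"
  shows "kth_largest_root p k = kth_largest_root q k"
proof (cases "q = 0")
  case True
  then show ?thesis using p by simp
next
  case q0: False
  have p0: "p \<noteq> 0" using p q0 by auto
  have root_p: "poly p y = 0 \<longleftrightarrow> (0 < m \<and> y = 0) \<or> poly q y = 0" for y
    using p by (auto simp: poly_power)
  have order_p: "order y p = order y q" if "y \<noteq> 0" for y
  proof -
    have "order y ([:0, 1:] ^ m) = 0" using that by (intro order_0I) (simp add: poly_power)
    then show ?thesis using p p0 by (simp add: order_mult)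
  qed
  define E where "E r = {x. poly r x = 0 \<and> k \<le> (\<Sum>y | poly r y = 0 \<and> x \<le> y. order y r)}" for r :: "real poly"
  have fin: "finite (E r)" if "r \<noteq> 0" for r
    unfolding E_def using poly_roots_finite[OF that] by (rule finite_subset[rotated]) auto
  have count: "(\<Sum>y | poly p y = 0 \<and> x \<le> y. order y p) = (\<Sum>y | poly q y = 0 \<and> x \<le> y. order y q)"
    if "0 < x" for x
  proof -
    have "{y. poly p y = 0 \<and> x \<le> y} = {y. poly q y = 0 \<and> x \<le> y}" using that root_p by auto
    then show ?thesis using that order_p by (auto intro!: sum.cong)
  qed
  have "E p \<inter> {0<..} = E q \<inter> {0<..}"
    unfolding E_def using root_p count by auto
  moreover have "\<forall>y\<in>E p. 0 \<le> y" "\<forall>y\<in>E q. 0 \<le> y"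
    unfolding E_def using root_p nonneg by auto
  ultimately show ?thesis
    unfolding kth_largest_root_def Let_def E_def[symmetric]
    using Max_or_zero_eq_positive_part fin p0 q0 by metis
qed

lemma kth_largest_eig_mult_commute:
  fixes X :: "'a \<Rightarrow> 'b \<Rightarrow> real" and Y :: "'b \<Rightarrow> 'a \<Rightarrow> real"
  assumes A: "finite A" and B: "finite B" and card: "card B \<le> card A"
    and nonneg: "\<And>y. poly (char_poly_on B (\<lambda>b b'. \<Sum>a\<in>A. Y b a * X a b')) y = 0 \<Longrightarrow> 0 \<le> y"
  shows "kth_largest_eig A (\<lambda>a a'. \<Sum>b\<in>B. X a b * Y b a') k
       = kth_largest_eig B (\<lambda>b b'. \<Sum>a\<in>A. Y b a * X a b') k"
proof -
  let ?p = "char_poly_on A (\<lambda>a a'. \<Sum>b\<in>B. X a b * Y b a')"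
  let ?q = "char_poly_on B (\<lambda>b b'. \<Sum>a\<in>A. Y b a * X a b')"
  have "[:0, 1:] ^ card B * ?p = [:0, 1:] ^ card B * ([:0, 1:] ^ (card A - card B) * ?q)"
    using char_poly_on_mult_commute[OF A B, of X Y] card
    by (simp add: power_add[symmetric] mult.assoc[symmetric])
  then have "?p = [:0, 1:] ^ (card A - card B) * ?q" by simp
  then show ?thesis
    unfolding kth_largest_eig_eq_kth_largest_root by (rule kth_largest_root_mult_X_power) (rule nonneg)
qed

text \<open>The matrix factors as \<open>X Y\<close> with \<open>Y X = K\<close>, where \<open>Y\<close> projects to the first coordinate.\<close>
lemma kth_largest_eig_average_fst:
  fixes K :: "'a \<Rightarrow> 'a \<Rightarrow> real" and L :: "'l set" and Z :: "'c \<Rightarrow> 'a \<Rightarrow> real"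
  assumes V: "finite V" and L: "finite L" "L \<noteq> {}"
    and gram: "\<And>v v'. v \<in> V \<Longrightarrow> K v v' = (\<Sum>c\<in>C. Z c v * Z c v')"
  shows "kth_largest_eig (V \<times> L) (\<lambda>a a'. K (fst a) (fst a') / real (card L)) k
       = kth_largest_eig V K k"
proof -
  define X where "X a v = K (fst a) v / real (card L)" for a :: "'a \<times> 'l" and v
  define Y where "Y v a = (of_bool (fst a = v) :: real)" for v and a :: "'a \<times> 'l"
  have cardL: "0 < card L" using L by (simp add: card_gt_0_iff)
  have XY: "(\<Sum>v\<in>V. X a v * Y v a') = K (fst a) (fst a') / real (card L)" if "a' \<in> V \<times> L" for a a'
    using that V by (auto simp: X_def Y_def sum_divide_distrib[symmetric])
  have YX: "(\<Sum>a\<in>V \<times> L. Y v a * X a v') = K v v'" if "v \<in> V" for v v'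
  proof -
    have "(\<Sum>a\<in>V \<times> L. Y v a * X a v') = (\<Sum>x\<in>V. \<Sum>l\<in>L. of_bool (x = v) * (K x v' / real (card L)))"
      by (simp add: sum.cartesian_product' X_def Y_def)
    also have "\<dots> = K v v'" using that V cardL by simp
    finally show ?thesis .
  qed
  have "card V \<le> card (V \<times> L)"
    using cardL by (simp add: card_cartesian_product)
  moreover have "0 \<le> y" if "poly (char_poly_on V (\<lambda>v v'. \<Sum>a\<in>V \<times> L. Y v a * X a v')) y = 0" for y
    using that char_poly_on_cong[of V "\<lambda>v v'. \<Sum>a\<in>V \<times> L. Y v a * X a v'" "\<lambda>v v'. \<Sum>c\<in>C. Z c v * Z c v'"]
    by (auto simp: YX gram intro: gram_char_poly_roots_nonneg[OF V])
  ultimately have "kth_largest_eig (V \<times> L) (\<lambda>a a'. \<Sum>v\<in>V. X a v * Y v a') k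
      = kth_largest_eig V (\<lambda>v v'. \<Sum>a\<in>V \<times> L. Y v a * X a v') k"
    using V L by (intro kth_largest_eig_mult_commute) auto
  then show ?thesis
    using kth_largest_eig_cong[of "V \<times> L", OF XY] kth_largest_eig_cong[of V, OF YX] by simp
qed

section \<open>Walks are measure preserving\<close>

lemma sum_lessThan_of_bool: "(\<Sum>j<d::nat. of_bool (P j)) = of_nat (card {j. j < d \<and> P j})"
proof -
  have "(\<Sum>j<d. of_bool (P j)) = of_nat (card ({..<d} \<inter> {j. P j}))"
    by (rule sum_of_bool_eq) simp_all
  also have "{..<d} \<inter> {j. P j} = {j. j < d \<and> P j}" by auto
  finally show ?thesis .
qed

definition label_lists :: "nat \<Rightarrow> nat \<Rightarrow> (nat \<times> nat) list set" where
  "label_lists d l = {ls. length ls = l \<and> set ls \<subseteq> {..<d} \<times> {..<d}}"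

lemma finite_label_lists: "finite (label_lists d l)"
  unfolding label_lists_def
  using finite_lists_length_eq[of "{..<d} \<times> {..<d}" l] by (simp add: conj_commute)

lemma card_label_lists: "card (label_lists d l) = (d * d) ^ l"
  unfolding label_lists_def
  using card_lists_length_eq[of "{..<d} \<times> {..<d}" l] by (simp add: conj_commute)

lemma sum_label_lists_Suc:
  "(\<Sum>ls\<in>label_lists d (Suc l). f ls) = (\<Sum>a<d. \<Sum>b<d. \<Sum>ls\<in>label_lists d l. f ((a, b) # ls))"
proof -
  have "label_lists d (Suc l) = (\<lambda>(p, ls). p # ls) ` (({..<d} \<times> {..<d}) \<times> label_lists d l)"
    unfolding label_lists_def by (auto simp: length_Suc_conv image_iff)
  moreover have "inj_on (\<lambda>(p, ls). p # ls) (({..<d} \<times> {..<d}) \<times> label_lists d l)"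
    by (auto simp: inj_on_def)
  ultimately show ?thesis by (simp add: sum.reindex sum.cartesian_product')
qed

lemma finite_cube: "finite (cube d1 s)"
proof -
  have "cube d1 s \<subseteq> {xs. set xs \<subseteq> {..<d1} \<and> length xs = s}" by (auto simp: cube_def)
  then show ?thesis by (rule finite_subset) (rule finite_lists_length_eq, simp)
qed

lemma finite_Vtx: "finite (Vtx n d1 s)"
  unfolding Vtx_def using finite_cube by simp

lemma card_Vtx_pos: "0 < n \<Longrightarrow> 0 < d1 \<Longrightarrow> 0 < card (Vtx n d1 s)"
  using finite_Vtx[of n d1 s] by (auto simp: card_gt_0_iff Vtx_def cube_def intro!: exI[of _ "replicate s 0"])

lemma Wset_eq_Vtx_times: "Wset n d1 d2 s k1 k2 = Vtx n d1 s \<times> label_lists d2 (k2 - k1)"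
  unfolding Wset_def label_lists_def by auto

lemma walk_from_snoc:
  "walk_from rot nbr s i x (ls @ [(a, b)]) = walk_step rot nbr s (i + length ls) (walk_from rot nbr s i x ls) a b"
proof (induction ls arbitrary: i x)
  case (Cons p ls)
  then show ?case by (cases p) simp
qed simp

locale regular_walk =
  fixes n d1 d2 s :: nat and rot :: "nat \<times> nat \<Rightarrow> nat \<times> nat" and nbr :: "nat list \<Rightarrow> nat \<Rightarrow> nat list"
  assumes rotation: "rotation_map n d1 rot"
    and labeling: "undirected_regular_labeling (cube d1 s) d2 nbr"
    and s_pos: "0 < s"
begin

abbreviation "V \<equiv> Vtx n d1 s"

lemma nbr_in_cube: "u \<in> cube d1 s \<Longrightarrow> j < d2 \<Longrightarrow> nbr u j \<in> cube d1 s"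
  using labeling unfolding undirected_regular_labeling_def by blast

lemma Hstep_in_Vtx: "x \<in> V \<Longrightarrow> a < d2 \<Longrightarrow> Hstep nbr a x \<in> V"
  using nbr_in_cube unfolding Vtx_def Hstep_def by auto

lemma Rot_in_Vtx_and_involutive:
  assumes x: "x \<in> V" and i: "i < s"
  shows "Rot rot i x \<in> V" "Rot rot i (Rot rot i x) = x"
proof -
  obtain v al where x_eq: "x = (v, al)" by (cases x)
  have v: "v < n" and al: "length al = s" "set al \<subseteq> {..<d1}"
    using x x_eq by (auto simp: Vtx_def cube_def)
  have "al ! i < d1" using al i nth_mem by blast
  moreover obtain v' a' where r: "rot (v, al ! i) = (v', a')" by (cases "rot (v, al ! i)")
  ultimately have "v' < n" "a' < d1" "rot (v', a') = (v, al ! i)"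
    using rotation v unfolding rotation_map_def by (metis SigmaD1 SigmaD2 lessThan_iff)+
  then show "Rot rot i x \<in> V" "Rot rot i (Rot rot i x) = x"
    using x_eq r al i
    by (auto simp: Rot_def Vtx_def cube_def dest!: subsetD[OF set_update_subset_insert])
qed

lemma bij_betw_Rot: "i < s \<Longrightarrow> bij_betw (Rot rot i) V V"
  by (rule bij_betw_byWitness[where f' = "Rot rot i"]) (auto simp: Rot_in_Vtx_and_involutive)

text \<open>Undirectedness makes the neighbour map of \<open>H\<close> measure preserving on average: every vertex
  is hit by exactly \<open>d2\<close> of the labelled edges.\<close>
lemma sum_nbr: "(\<Sum>u\<in>cube d1 s. \<Sum>a<d2. g (nbr u a)) = real d2 * (\<Sum>u\<in>cube d1 s. g u)"
proof -
  let ?C = "cube d1 s"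
  have hits: "(\<Sum>u\<in>?C. \<Sum>a<d2. of_bool (nbr u a = w)) = real d2" if w: "w \<in> ?C" for w
  proof -
    have "(\<Sum>u\<in>?C. \<Sum>a<d2. of_bool (nbr u a = w)) = (\<Sum>u\<in>?C. real (card {j. j < d2 \<and> nbr u j = w}))"
      by (simp only: sum_lessThan_of_bool)
    also have "\<dots> = (\<Sum>u\<in>?C. real (card {j. j < d2 \<and> nbr w j = u}))"
      using labeling w unfolding undirected_regular_labeling_def by (intro sum.cong refl) auto
    also have "\<dots> = (\<Sum>u\<in>?C. \<Sum>a<d2. of_bool (nbr w a = u))"
      by (simp only: sum_lessThan_of_bool)
    also have "\<dots> = (\<Sum>a<d2. \<Sum>u\<in>?C. of_bool (nbr w a = u))"
      by (rule sum.swap)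
    also have "\<dots> = real d2"
      using finite_cube w nbr_in_cube by simp
    finally show ?thesis .
  qed
  have "(\<Sum>u\<in>?C. \<Sum>a<d2. g (nbr u a)) = (\<Sum>u\<in>?C. \<Sum>a<d2. \<Sum>w\<in>?C. of_bool (nbr u a = w) * g w)"
    using finite_cube nbr_in_cube by (intro sum.cong refl) simp
  also have "\<dots> = (\<Sum>u\<in>?C. \<Sum>w\<in>?C. \<Sum>a<d2. of_bool (nbr u a = w) * g w)"
    by (rule sum.cong[OF refl], rule sum.swap)
  also have "\<dots> = (\<Sum>w\<in>?C. \<Sum>u\<in>?C. \<Sum>a<d2. of_bool (nbr u a = w) * g w)"
    by (rule sum.swap)
  also have "\<dots> = (\<Sum>w\<in>?C. g w * (\<Sum>u\<in>?C. \<Sum>a<d2. of_bool (nbr u a = w)))"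
    by (simp add: sum_distrib_left mult.commute del: sum_of_bool_eq sum_of_bool_mult_eq)
  also have "\<dots> = real d2 * (\<Sum>u\<in>?C. g u)"
    by (simp add: hits sum_distrib_left mult.commute del: sum_of_bool_eq)
  finally show ?thesis .
qed

lemma sum_Hstep: "(\<Sum>x\<in>V. \<Sum>a<d2. G (Hstep nbr a x)) = real d2 * (\<Sum>x\<in>V. G x)"
proof -
  have "(\<Sum>x\<in>V. \<Sum>a<d2. G (Hstep nbr a x)) = (\<Sum>v<n. \<Sum>u\<in>cube d1 s. \<Sum>a<d2. G (v, nbr u a))"
    by (simp add: Vtx_def sum.cartesian_product' Hstep_def)
  also have "\<dots> = (\<Sum>v<n. real d2 * (\<Sum>u\<in>cube d1 s. G (v, u)))"
    by (intro sum.cong refl sum_nbr)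
  also have "\<dots> = real d2 * (\<Sum>x\<in>V. G x)"
    by (simp add: Vtx_def sum.cartesian_product' sum_distrib_left)
  finally show ?thesis .
qed

lemma sum_walk_step:
  "(\<Sum>x\<in>V. \<Sum>a<d2. \<Sum>b<d2. G (walk_step rot nbr s i x a b)) = real d2 ^ 2 * (\<Sum>x\<in>V. G x)"
proof -
  define G' where "G' z = (\<Sum>b<d2. G (Hstep nbr b z))" for z
  have "(\<Sum>x\<in>V. \<Sum>a<d2. \<Sum>b<d2. G (walk_step rot nbr s i x a b))
      = (\<Sum>x\<in>V. \<Sum>a<d2. G' (Rot rot (i mod s) (Hstep nbr a x)))"
    by (simp add: G'_def walk_step_def)
  also have "\<dots> = real d2 * (\<Sum>x\<in>V. G' (Rot rot (i mod s) x))"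
    by (rule sum_Hstep)
  also have "\<dots> = real d2 * (\<Sum>x\<in>V. G' x)"
    using s_pos by (simp add: sum.reindex_bij_betw[OF bij_betw_Rot])
  also have "\<dots> = real d2 ^ 2 * (\<Sum>x\<in>V. G x)"
    by (simp add: G'_def sum_Hstep power2_eq_square)
  finally show ?thesis .
qed

lemma sum_walk_from:
  "(\<Sum>x\<in>V. \<Sum>ls\<in>label_lists d2 l. G (walk_from rot nbr s i x ls)) = (real d2 ^ 2) ^ l * (\<Sum>x\<in>V. G x)"
proof (induction l arbitrary: i)
  case 0
  have "label_lists d2 0 = {[]}" by (auto simp: label_lists_def)
  then show ?case by simp
next
  case (Suc l)
  have "(\<Sum>x\<in>V. \<Sum>ls\<in>label_lists d2 (Suc l). G (walk_from rot nbr s i x ls))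
      = (\<Sum>x\<in>V. \<Sum>a<d2. \<Sum>b<d2. \<Sum>ls\<in>label_lists d2 l.
           G (walk_from rot nbr s (Suc i) (walk_step rot nbr s i x a b) ls))"
    by (simp add: sum_label_lists_Suc)
  also have "\<dots> = real d2 ^ 2 * (\<Sum>x\<in>V. \<Sum>ls\<in>label_lists d2 l. G (walk_from rot nbr s (Suc i) x ls))"
    by (rule sum_walk_step)
  also have "\<dots> = (real d2 ^ 2) ^ Suc l * (\<Sum>x\<in>V. G x)"
    by (simp add: Suc.IH)
  finally show ?case .
qed

end

section \<open>The conditional expectation operator\<close>

lemma I_tensor_AH_eq: "I_tensor_AH d2 nbr x y = (\<Sum>a<d2. of_bool (Hstep nbr a x = y)) / real d2"
proof (cases "fst x = fst y")
  case True
  then have "Hstep nbr a x = y \<longleftrightarrow> nbr (snd x) a = snd y" for a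
    by (cases x, cases y) (auto simp: Hstep_def)
  with True show ?thesis
    by (simp add: I_tensor_AH_def norm_adj_def sum_lessThan_of_bool del: sum_of_bool_eq)
next
  case False
  then have "Hstep nbr a x \<noteq> y" for a by (auto simp: Hstep_def)
  with False show ?thesis by (simp add: I_tensor_AH_def)
qed

definition step_kernel :: "(nat \<times> nat \<Rightarrow> nat \<times> nat) \<Rightarrow> (nat list \<Rightarrow> nat \<Rightarrow> nat list) \<Rightarrow> nat
    \<Rightarrow> nat \<Rightarrow> nat \<Rightarrow> nat \<times> nat list \<Rightarrow> nat \<times> nat list \<Rightarrow> real" where
  "step_kernel rot nbr s d2 i x y =
     (\<Sum>a<d2. \<Sum>b<d2. of_bool (walk_step rot nbr s i x a b = y)) / real d2 ^ 2"

context regular_walk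
begin

lemma I_tensor_AH_apply:
  assumes x: "x \<in> V"
  shows "(\<Sum>y\<in>V. I_tensor_AH d2 nbr x y * F y) = (\<Sum>a<d2. F (Hstep nbr a x)) / real d2"
proof -
  have "(\<Sum>y\<in>V. I_tensor_AH d2 nbr x y * F y) = (\<Sum>y\<in>V. \<Sum>a<d2. of_bool (Hstep nbr a x = y) * F y) / real d2"
    by (simp add: I_tensor_AH_eq sum_divide_distrib sum_distrib_right
        del: sum_of_bool_eq sum_of_bool_mult_eq)
  also have "\<dots> = (\<Sum>a<d2. \<Sum>y\<in>V. of_bool (Hstep nbr a x = y) * F y) / real d2"
    by (subst sum.swap) (rule refl)
  also have "\<dots> = (\<Sum>a<d2. F (Hstep nbr a x)) / real d2"
    using Hstep_in_Vtx[OF x] by (simp add: finite_Vtx)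
  finally show ?thesis .
qed

lemma Gmat_apply:
  assumes z: "z \<in> V" and i: "i < s"
  shows "(\<Sum>z'\<in>V. Gmat rot i z z' * F z') = F (Rot rot i z)"
proof -
  have "Gmat rot i z z' = of_bool (Rot rot i z = z')" if "z' \<in> V" for z'
    using Rot_in_Vtx_and_involutive[OF z i] Rot_in_Vtx_and_involutive[OF that i]
    by (auto simp: Gmat_def)
  then show ?thesis
    using Rot_in_Vtx_and_involutive(1)[OF z i] by (simp add: finite_Vtx cong: sum.cong)
qed

lemma mat_mult_eq_step_kernel:
  assumes x: "x \<in> V"
  shows "mat_mult V (mat_mult V (I_tensor_AH d2 nbr) (Gmat rot (k mod s))) (I_tensor_AH d2 nbr) x y
       = step_kernel rot nbr s d2 k x y"
proof -
  let ?A = "I_tensor_AH d2 nbr" and ?R = "Rot rot (k mod s)"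
  have "mat_mult V (mat_mult V ?A (Gmat rot (k mod s))) ?A x y
      = (\<Sum>z\<in>V. ?A x z * (\<Sum>z'\<in>V. Gmat rot (k mod s) z z' * ?A z' y))"
    unfolding mat_mult_def sum_distrib_left sum_distrib_right
    by (subst sum.swap) (simp add: mult.assoc)
  also have "\<dots> = (\<Sum>z\<in>V. ?A x z * ?A (?R z) y)"
    using s_pos by (intro sum.cong refl) (simp add: Gmat_apply)
  also have "\<dots> = (\<Sum>a<d2. ?A (?R (Hstep nbr a x)) y) / real d2"
    by (rule I_tensor_AH_apply[OF x])
  also have "\<dots> = step_kernel rot nbr s d2 k x y"
    by (simp add: I_tensor_AH_eq step_kernel_def walk_step_def sum_divide_distrib power2_eq_square
        del: sum_of_bool_eq)
  finally show ?thesis .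
qed

end

lemma split1_fiber:
  assumes w: "w \<in> Vtx n d1 s \<times> label_lists d2 (k2 - k1)" and k: "k1 \<le> k2" "k2 < k3"
  shows "{\<omega> \<in> Wset n d1 d2 s k1 k3. split1 k1 k2 \<omega> = w}
       = (\<lambda>(p, ls). (fst w, snd w @ p # ls)) ` (({..<d2} \<times> {..<d2}) \<times> label_lists d2 (k3 - Suc k2))"
    (is "?fiber = ?h ` (?D \<times> ?L)")
proof
  show "?fiber \<subseteq> ?h ` (?D \<times> ?L)"
  proof
    fix \<omega> assume "\<omega> \<in> ?fiber"
    then obtain ls where \<omega>: "\<omega> = (fst w, ls)" and len: "length ls = k3 - k1"
      and labels: "set ls \<subseteq> ?D" and prefix: "take (k2 - k1) ls = snd w"
      by (auto simp: Wset_def split1_def)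
    have lt: "k2 - k1 < length ls" using len k by simp
    then have "ls = snd w @ ls ! (k2 - k1) # drop (Suc (k2 - k1)) ls"
      using id_take_nth_drop[OF lt] prefix by simp
    moreover have "ls ! (k2 - k1) \<in> ?D" using labels lt nth_mem by blast
    moreover have "drop (Suc (k2 - k1)) ls \<in> ?L"
      using labels len k by (auto simp: label_lists_def dest: in_set_dropD)
    ultimately show "\<omega> \<in> ?h ` (?D \<times> ?L)"
      using \<omega> by (intro image_eqI[where x = "(ls ! (k2 - k1), drop (Suc (k2 - k1)) ls)"]) auto
  qed
  show "?h ` (?D \<times> ?L) \<subseteq> ?fiber"
    using w k by (auto simp: Wset_def label_lists_def split1_def)
qed

lemma S_op_unit_vec:
  assumes w: "w \<in> Vtx n d1 s \<times> label_lists d2 (k2 - k1)"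
    and a: "a \<in> Vtx n d1 s \<times> label_lists d2 (k3 - Suc k2)" and k: "k1 \<le> k2" "k2 < k3"
  shows "S_op n d1 d2 s rot nbr k1 k2 k3 (Defs.unit_vec a) w
       = step_kernel rot nbr s d2 k2 (walk_from rot nbr s k1 (fst w) (snd w)) (fst a)
           / real (card (label_lists d2 (k3 - Suc k2)))"
proof -
  let ?D = "{..<d2} \<times> {..<d2}" and ?L = "label_lists d2 (k3 - Suc k2)"
  let ?h = "\<lambda>(p, ls). (fst w, snd w @ p # ls)"
  let ?x = "walk_from rot nbr s k1 (fst w) (snd w)"
  have inj: "inj_on ?h (?D \<times> ?L)" by (auto simp: inj_on_def)
  have len: "length (snd w) = k2 - k1" using w by (auto simp: label_lists_def)
  have split2_h: "split2 rot nbr s k1 k2 (fst w, snd w @ (b, c) # ls) = (walk_step rot nbr s k2 ?x b c, ls)"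
    for b c ls
    using len k by (simp add: split2_def walk_from_snoc)
  have unit: "Defs.unit_vec a (z, ls) = of_bool (z = fst a) * of_bool (ls = snd a)" for z ls
    by (cases a) (auto simp: Defs.unit_vec_def)
  have one: "(\<Sum>ls\<in>?L. of_bool (ls = snd a)) = (1 :: real)"
    using a finite_label_lists by (simp add: mem_Times_iff)
  have "(\<Sum>\<omega>\<in>?h ` (?D \<times> ?L). Defs.unit_vec a (split2 rot nbr s k1 k2 \<omega>))
      = (\<Sum>b<d2. \<Sum>c<d2. \<Sum>ls\<in>?L. of_bool (walk_step rot nbr s k2 ?x b c = fst a) * of_bool (ls = snd a))"
    by (simp add: sum.reindex[OF inj] sum.cartesian_product' split2_h unit del: sum_of_bool_mult_eq)
  also have "\<dots> = (\<Sum>b<d2. \<Sum>c<d2. of_bool (walk_step rot nbr s k2 ?x b c = fst a))"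
    using one by (simp add: sum_distrib_left[symmetric] del: sum_of_bool_eq sum_of_bool_mult_eq)
  finally show ?thesis
    using split1_fiber[OF w k] card_image[OF inj]
    by (simp add: S_op_def step_kernel_def card_cartesian_product power2_eq_square field_simps)
qed

context regular_walk
begin

lemma gram_S_op:
  assumes pos: "0 < n" "0 < d1" "0 < d2" and k: "k1 \<le> k2" "k2 < k3"
    and a: "a \<in> Wset n d1 d2 s (k2 + 1) k3" and a': "a' \<in> Wset n d1 d2 s (k2 + 1) k3"
  shows "gram_wrt (Wset n d1 d2 s (k2 + 1) k3) (uniform_prob (Wset n d1 d2 s (k2 + 1) k3))
           (Wset n d1 d2 s k1 k2) (uniform_prob (Wset n d1 d2 s k1 k2)) (S_op n d1 d2 s rot nbr k1 k2 k3) a a'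
       = (\<Sum>x\<in>V. step_kernel rot nbr s d2 k2 x (fst a) * step_kernel rot nbr s d2 k2 x (fst a'))
           / real (card (label_lists d2 (k3 - Suc k2)))"
proof -
  let ?S = "S_op n d1 d2 s rot nbr k1 k2 k3" and ?T = "step_kernel rot nbr s d2 k2"
  let ?L = "label_lists d2 (k3 - Suc k2)" and ?l = "k2 - k1"
  let ?F = "\<lambda>x. ?T x (fst a) * ?T x (fst a')"
  have a: "a \<in> V \<times> ?L" and a': "a' \<in> V \<times> ?L" using a a' by (simp_all add: Wset_eq_Vtx_times)
  have "(\<Sum>w\<in>V \<times> label_lists d2 ?l. ?S (Defs.unit_vec a) w * ?S (Defs.unit_vec a') w)
      = (\<Sum>x\<in>V. \<Sum>ls\<in>label_lists d2 ?l. ?F (walk_from rot nbr s k1 x ls)) / real (card ?L) ^ 2"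
    using a a' k
    by (simp add: S_op_unit_vec sum.cartesian_product' sum_divide_distrib power2_eq_square)
  also have "\<dots> = (real d2 ^ 2) ^ ?l * (\<Sum>x\<in>V. ?F x) / real (card ?L) ^ 2"
    by (simp only: sum_walk_from[where G = ?F])
  finally have sum_eq: "(\<Sum>w\<in>V \<times> label_lists d2 ?l. ?S (Defs.unit_vec a) w * ?S (Defs.unit_vec a') w)
      = (real d2 ^ 2) ^ ?l * (\<Sum>x\<in>V. ?F x) / real (card ?L) ^ 2" .
  have "0 < card V" "0 < card ?L" using pos card_Vtx_pos by (simp_all add: card_label_lists)
  with pos(3) show ?thesis
    by (simp add: gram_wrt_def uniform_prob_def Wset_eq_Vtx_times card_cartesian_product card_label_lists
        sum_divide_distrib[symmetric] sum_eq power_mult_distrib power2_eq_square field_simps)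
qed

end

lemma gram_wrt_uniform_mat_op:
  assumes A: "finite A" "A \<noteq> {}" and y: "y \<in> A" "y' \<in> A"
  shows "gram_wrt A (uniform_prob A) A (uniform_prob A) (mat_op A M) y y' = (\<Sum>x\<in>A. M x y * M x y')"
proof -
  have "mat_op A M (Defs.unit_vec z) x = M x z" if "z \<in> A" for z x
    using A that by (simp add: mat_op_def Defs.unit_vec_def if_distrib cong: if_cong)
  then show ?thesis
    using A y by (simp add: gram_wrt_def uniform_prob_def sum_divide_distrib[symmetric])
qed

theorem mainTheorem6:
  fixes n d1 d2 s :: nat
    and rot :: "nat \<times> nat \<Rightarrow> nat \<times> nat"
    and nbr :: "nat list \<Rightarrow> nat \<Rightarrow> nat list"
    and k1 k2 k3 :: nat
  assumes "0 < n" and "0 < d1" and "0 < d2" and "0 < s"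
    and "rotation_map n d1 rot"
    and "locally_invertible n d1 rot"
    and "undirected_regular_labeling (cube d1 s) d2 nbr"
    and "k1 \<le> k2" and "k2 < k3"
  shows "sigma2_unif (Wset n d1 d2 s (k2 + 1) k3) (Wset n d1 d2 s k1 k2)
            (S_op n d1 d2 s rot nbr k1 k2 k3)
         = sigma2_unif (Vtx n d1 s) (Vtx n d1 s)
            (mat_op (Vtx n d1 s)
               (mat_mult (Vtx n d1 s)
                  (mat_mult (Vtx n d1 s) (I_tensor_AH d2 nbr) (Gmat rot (k2 mod s)))
                  (I_tensor_AH d2 nbr)))"
proof -
  interpret regular_walk n d1 d2 s rot nbr
    using assms by unfold_locales
  define M where "M = mat_mult V (mat_mult V (I_tensor_AH d2 nbr) (Gmat rot (k2 mod s))) (I_tensor_AH d2 nbr)"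
  define L where "L = label_lists d2 (k3 - Suc k2)"
  define K where "K y y' = (\<Sum>x\<in>V. M x y * M x y')" for y y'
  have V: "finite V" "V \<noteq> {}" using card_Vtx_pos[OF assms(1,2), of s] by (auto simp: card_gt_0_iff)
  have "0 < card L" using assms(3) by (simp add: L_def card_label_lists)
  then have L: "finite L" "L \<noteq> {}" by (auto simp: card_gt_0_iff)
  let ?W' = "Wset n d1 d2 s (k2 + 1) k3" and ?W = "Wset n d1 d2 s k1 k2"
  let ?G = "gram_wrt ?W' (uniform_prob ?W') ?W (uniform_prob ?W) (S_op n d1 d2 s rot nbr k1 k2 k3)"
  have "kth_largest_eig ?W' ?G 2 = kth_largest_eig ?W' (\<lambda>a a'. K (fst a) (fst a') / real (card L)) 2"
  proof (rule kth_largest_eig_cong)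
    fix a a' assume "a \<in> ?W'" "a' \<in> ?W'"
    from gram_S_op[OF assms(1-3,8,9) this] show "?G a a' = K (fst a) (fst a') / real (card L)"
      by (simp add: K_def M_def L_def mat_mult_eq_step_kernel)
  qed
  also have "\<dots> = kth_largest_eig (V \<times> L) (\<lambda>a a'. K (fst a) (fst a') / real (card L)) 2"
    by (simp add: Wset_eq_Vtx_times L_def)
  also have "\<dots> = kth_largest_eig V K 2"
    using V L by (intro kth_largest_eig_average_fst) (auto simp: K_def)
  also have "\<dots> = kth_largest_eig V (gram_wrt V (uniform_prob V) V (uniform_prob V) (mat_op V M)) 2"
    using V by (intro kth_largest_eig_cong) (simp add: K_def gram_wrt_uniform_mat_op)
  finally show ?thesis
    unfolding sigma2_unif_def singular_value_def M_def by simp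
qed

end
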